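(* For a threshold graph $G$ and an integer $d\ge0$, $\mathrm{degen}(G)\ge d$ if and only if $G$ contains a subgraph isomorphic to $K_{d+1}$.
   Context: A threshold graph on $n\ge1$ vertices is built from a base vertex $v_0$ by successively adding $v_1,\dots,v_{n-1}$, each either isolated (adjacent to no earlier vertex) or dominating (adjacent to all earlier vertices). The degeneracy of a graph $G$ is $\mathrm{degen}(G)=\max_{H}\min_{v\in V(H)}\deg_H(v)$, the maximum over nonempty induced subgraphs $H$ of $G$ of the minimum degree of $H$; equivalently, the largest $k$ such that the $k$-core of $G$ (the maximal induced subgraph of minimum degree at least $k$) is nonempty. *)

theory Defs
  imports Main
begin

text \<open>A graph is given by a finite vertex set V and an adjacency relation E
  (only its restriction to V matters).\<close>

inductive threshold_graph :: "'a set \<Rightarrow> ('a \<Rightarrow> 'a \<Rightarrow> bool) \<Rightarrow> bool" where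
  base: "\<not> E v v \<Longrightarrow> threshold_graph {v} E"
| add_isolated: "threshold_graph V E \<Longrightarrow> v \<notin> V \<Longrightarrow> \<not> E v v \<Longrightarrow>
     (\<forall>u\<in>V. \<not> E v u \<and> \<not> E u v) \<Longrightarrow> threshold_graph (insert v V) E"
| add_dominating: "threshold_graph V E \<Longrightarrow> v \<notin> V \<Longrightarrow> \<not> E v v \<Longrightarrow>
     (\<forall>u\<in>V. E v u \<and> E u v) \<Longrightarrow> threshold_graph (insert v V) E"

definition deg_in :: "'a set \<Rightarrow> ('a \<Rightarrow> 'a \<Rightarrow> bool) \<Rightarrow> 'a \<Rightarrow> nat" where
  "deg_in H E v = card {u \<in> H. E v u}"

definition min_degree :: "'a set \<Rightarrow> ('a \<Rightarrow> 'a \<Rightarrow> bool) \<Rightarrow> nat" where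
  "min_degree H E = Min (deg_in H E ` H)"

definition degen :: "'a set \<Rightarrow> ('a \<Rightarrow> 'a \<Rightarrow> bool) \<Rightarrow> nat" where
  "degen V E = Max {min_degree H E | H. H \<subseteq> V \<and> H \<noteq> {}}"

definition has_complete_subgraph :: "'a set \<Rightarrow> ('a \<Rightarrow> 'a \<Rightarrow> bool) \<Rightarrow> nat \<Rightarrow> bool" where
  "has_complete_subgraph V E m \<longleftrightarrow>
     (\<exists>f :: nat \<Rightarrow> 'a. inj_on f {..<m} \<and> f ` {..<m} \<subseteq> V \<and>
        (\<forall>i<m. \<forall>j<m. i \<noteq> j \<longrightarrow> E (f i) (f j)))"

end

theory Submission
  imports Defs
begin

text \<open>Only a clique can produce minimum degree at least d in a threshold graph: a subgraph H of
  minimum degree d cannot use the last added vertex v if v is isolated (unless d = 0), and if v is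
  dominating then removing v from H lowers every degree by exactly one, so by induction
  H - {v} contains a d-clique, which v extends to a (d+1)-clique. Conversely a (d+1)-clique is
  itself a subgraph of minimum degree d.\<close>

definition clique :: "'a set \<Rightarrow> ('a \<Rightarrow> 'a \<Rightarrow> bool) \<Rightarrow> bool" where
  "clique C E \<longleftrightarrow> (\<forall>x\<in>C. \<forall>y\<in>C. x \<noteq> y \<longrightarrow> E x y)"

lemma clique_singleton: "clique {x} E"
  by (simp add: clique_def)

lemma clique_insert:
  assumes "clique C E" and "\<forall>u\<in>C. E v u \<and> E u v"
  shows "clique (insert v C) E"
  using assms by (auto simp: clique_def)

lemma has_complete_subgraph_iff_clique:
  "has_complete_subgraph V E m \<longleftrightarrow> (\<exists>C\<subseteq>V. card C = m \<and> clique C E)"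
proof
  assume "has_complete_subgraph V E m"
  then obtain f where f: "inj_on f {..<m}" "f ` {..<m} \<subseteq> V"
      "\<forall>i<m. \<forall>j<m. i \<noteq> j \<longrightarrow> E (f i) (f j)"
    unfolding has_complete_subgraph_def by blast
  have "clique (f ` {..<m}) E"
    using f(3) by (auto simp: clique_def)
  with f(1,2) show "\<exists>C\<subseteq>V. card C = m \<and> clique C E"
    by (intro exI[of _ "f ` {..<m}"]) (simp add: card_image)
next
  assume "\<exists>C\<subseteq>V. card C = m \<and> clique C E"
  then obtain C where C: "C \<subseteq> V" "card C = m" "clique C E" by blast
  show "has_complete_subgraph V E m"
  proof (cases "m = 0")
    case True
    then show ?thesis by (simp add: has_complete_subgraph_def)
  next
    case False
    then have "finite C" using C(2) card.infinite by force
    then obtain f where f: "bij_betw f {..<m} C"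
      using C(2) finite_same_card_bij[of "{..<m}" C] by auto
    then have "inj_on f {..<m}" "f ` {..<m} = C"
      by (auto simp: bij_betw_def)
    moreover have "E (f i) (f j)" if "i < m" "j < m" "i \<noteq> j" for i j
      using that C(3) \<open>inj_on f {..<m}\<close> \<open>f ` {..<m} = C\<close>
      unfolding clique_def by (metis imageI inj_on_eq_iff lessThan_iff)
    ultimately show ?thesis
      using C(1) unfolding has_complete_subgraph_def by blast
  qed
qed

lemma deg_in_clique:
  assumes "finite C" "clique C E" "x \<in> C"
  shows "card C - 1 \<le> deg_in C E x"
proof -
  have "C - {x} \<subseteq> {u \<in> C. E x u}"
    using assms(2,3) by (auto simp: clique_def)
  then have "card (C - {x}) \<le> deg_in C E x"
    unfolding deg_in_def using assms(1) by (intro card_mono) auto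
  then show ?thesis using assms(1,3) by simp
qed

lemma deg_in_insert_neighbour:
  assumes "finite H" "v \<notin> H" "E w v"
  shows "deg_in (insert v H) E w = Suc (deg_in H E w)"
proof -
  have "{u \<in> insert v H. E w u} = insert v {u \<in> H. E w u}"
    using assms(3) by auto
  then show ?thesis
    using assms(1,2) by (simp add: deg_in_def)
qed

lemma min_degree_ge_iff:
  assumes "finite H" "H \<noteq> {}"
  shows "d \<le> min_degree H E \<longleftrightarrow> (\<forall>v\<in>H. d \<le> deg_in H E v)"
  using assms by (simp add: min_degree_def)

lemma degen_ge_iff:
  assumes "finite V" "V \<noteq> {}"
  shows "d \<le> degen V E \<longleftrightarrow> (\<exists>H\<subseteq>V. H \<noteq> {} \<and> (\<forall>v\<in>H. d \<le> deg_in H E v))"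
proof -
  define S where "S = {min_degree H E | H. H \<subseteq> V \<and> H \<noteq> {}}"
  have "finite S"
    unfolding S_def using assms(1) by (simp add: setcompr_eq_image image_Collect_subsetI)
  moreover have "S \<noteq> {}"
    unfolding S_def using assms(2) by auto
  ultimately have "d \<le> degen V E \<longleftrightarrow> (\<exists>m\<in>S. d \<le> m)"
    by (simp add: degen_def S_def[symmetric] Max_ge_iff)
  also have "\<dots> \<longleftrightarrow> (\<exists>H\<subseteq>V. H \<noteq> {} \<and> d \<le> min_degree H E)"
    by (auto simp: S_def)
  also have "\<dots> \<longleftrightarrow> (\<exists>H\<subseteq>V. H \<noteq> {} \<and> (\<forall>v\<in>H. d \<le> deg_in H E v))"
    using assms(1) min_degree_ge_iff by (meson rev_finite_subset)
  finally show ?thesis .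
qed

lemma threshold_graph_finite: "threshold_graph V E \<Longrightarrow> finite V"
  by (induction rule: threshold_graph.induct) auto

lemma threshold_graph_nonempty: "threshold_graph V E \<Longrightarrow> V \<noteq> {}"
  by (induction rule: threshold_graph.induct) auto

lemma threshold_graph_min_degree_clique:
  assumes "threshold_graph V E" "H \<subseteq> V" "H \<noteq> {}" "\<forall>v\<in>H. d \<le> deg_in H E v"
  shows "\<exists>C\<subseteq>H. card C = Suc d \<and> clique C E"
  using assms
proof (induction arbitrary: H d rule: threshold_graph.induct)
  case (base E v)
  then have H: "H = {v}" by auto
  with base.hyps have "deg_in H E v = 0" by (simp add: deg_in_def)
  with base.prems(3) H have "d = 0" by simp
  with H show ?case by (auto simp: clique_singleton)
next
  case (add_isolated V E v)
  show ?case
  proof (cases "v \<in> H")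
    case True
    then have "{u \<in> H. E v u} = {}"
      using add_isolated.hyps(3,4) add_isolated.prems(1) by auto
    then have "deg_in H E v = 0" unfolding deg_in_def by (metis card.empty)
    then have "d = 0" using add_isolated.prems(3) True by (metis le_zero_eq)
    then show ?thesis
      using True by (intro exI[of _ "{v}"]) (auto simp: clique_singleton)
  next
    case False
    then have "H \<subseteq> V" using add_isolated.prems(1) by auto
    then show ?thesis using add_isolated.IH add_isolated.prems(2,3) by blast
  qed
next
  case (add_dominating V E v)
  show ?case
  proof (cases "v \<in> H")
    case False
    then have "H \<subseteq> V" using add_dominating.prems(1) by auto
    then show ?thesis using add_dominating.IH add_dominating.prems(2,3) by blast
  next
    case vH: True
    show ?thesis
    proof (cases d)
      case 0
      then show ?thesis
        using vH by (intro exI[of _ "{v}"]) (auto simp: clique_singleton)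
    next
      case (Suc d')
      define H' where "H' = H - {v}"
      have H'V: "H' \<subseteq> V" and H: "H = insert v H'" and vH': "v \<notin> H'"
        using add_dominating.prems(1) vH by (auto simp: H'_def)
      have finH': "finite H'"
        using H'V threshold_graph_finite[OF add_dominating.hyps(1)] finite_subset by blast
      have "0 < deg_in H E v" using add_dominating.prems(3) vH Suc by auto
      then obtain u where "u \<in> H" "E v u"
        unfolding deg_in_def by (metis (no_types, lifting) card.empty empty_Collect_eq less_irrefl)
      then have H'_ne: "H' \<noteq> {}" using add_dominating.hyps(3) by (auto simp: H'_def)
      have H'_deg: "\<forall>w\<in>H'. d' \<le> deg_in H' E w"
      proof
        fix w assume w: "w \<in> H'"
        then have "E w v" using H'V add_dominating.hyps(4) by auto
        then have "deg_in H E w = Suc (deg_in H' E w)"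
          unfolding H by (rule deg_in_insert_neighbour[OF finH' vH'])
        moreover have "d \<le> deg_in H E w"
          using w add_dominating.prems(3) by (simp add: H'_def)
        ultimately show "d' \<le> deg_in H' E w" using Suc by simp
      qed
      obtain C where C: "C \<subseteq> H'" "card C = Suc d'" "clique C E"
        using add_dominating.IH[OF H'V H'_ne H'_deg] by blast
      have "finite C" "v \<notin> C" using C(1) finH' vH' finite_subset by auto
      then have "card (insert v C) = Suc d" using C(2) Suc by simp
      moreover have "clique (insert v C) E"
        using C H'V add_dominating.hyps(4) by (intro clique_insert) auto
      moreover have "insert v C \<subseteq> H" using C(1) H by blast
      ultimately show ?thesis by blast
    qed
  qed
qed

theorem mainTheorem11:
  fixes V :: "'a set" and E :: "'a \<Rightarrow> 'a \<Rightarrow> bool" and d :: nat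
  assumes "threshold_graph V E"
  shows "degen V E \<ge> d \<longleftrightarrow> has_complete_subgraph V E (d + 1)"
  unfolding degen_ge_iff[OF threshold_graph_finite[OF assms] threshold_graph_nonempty[OF assms]]
    has_complete_subgraph_iff_clique
proof
  assume "\<exists>H\<subseteq>V. H \<noteq> {} \<and> (\<forall>v\<in>H. d \<le> deg_in H E v)"
  then obtain H where H: "H \<subseteq> V" "H \<noteq> {}" "\<forall>v\<in>H. d \<le> deg_in H E v" by blast
  obtain C where "C \<subseteq> H" "card C = Suc d" "clique C E"
    using threshold_graph_min_degree_clique[OF assms H] by blast
  with \<open>H \<subseteq> V\<close> show "\<exists>C\<subseteq>V. card C = d + 1 \<and> clique C E" by auto
next
  assume "\<exists>C\<subseteq>V. card C = d + 1 \<and> clique C E"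
  then obtain C where C: "C \<subseteq> V" "card C = d + 1" "clique C E" by blast
  then have "finite C" "C \<noteq> {}" by (auto intro: card_ge_0_finite)
  moreover have "\<forall>v\<in>C. d \<le> deg_in C E v"
    using deg_in_clique[OF \<open>finite C\<close> C(3)] C(2) by auto
  ultimately show "\<exists>H\<subseteq>V. H \<noteq> {} \<and> (\<forall>v\<in>H. d \<le> deg_in H E v)"
    using C(1) by blast
qed

end
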